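(* Let $\Gamma,\Delta$ be finite sets of formulas, $\alpha$ an atomic mapping for $\Gamma\cup\Delta$, and $\mathcal{Q}$ the quasi-simulation base for $\Gamma\cup\Delta$ and $\alpha$. Let $\Theta_{\mathsf{At}}$ be any (possibly empty) finite set of atoms, $\Sigma$ any non-empty finite set of subformulas of formulas in $\Gamma\cup\Delta$, and $\Sigma_{\mathsf{At}}=\{p^B\mid B\in\Sigma\}$. Then for every base $\mathcal{B}\supseteq\mathcal{Q}$: $\Vdash_{\mathcal{B}}\Sigma,\Theta_{\mathsf{At}}$ if and only if $\vdash_{\mathcal{B}}\ \Rightarrow\Sigma_{\mathsf{At}},\Theta_{\mathsf{At}}$.
   Context: Fix a countably infinite set $\mathsf{At}$ of atoms. Formulas are built from atoms and the constant $\bot$ using the binary connectives $\land,\lor,\to$. All contexts are finite sets (not multisets) of formulas; a comma denotes union; a subscript $\mathsf{At}$ indicates a finite set of atoms. An atomic sequent has the form $\Gamma_{\mathsf{At}} \Rightarrow \Delta_{\mathsf{At}}$. An atomic rule has finitely many (possibly zero) atomic sequents as premises and one atomic sequent as conclusion; a rule with zero premises is an atomic axiom. A base is a (possibly empty) set of atomic rules; $\mathcal{C}\supseteq\mathcal{B}$ ($\mathcal{C}$ extends $\mathcal{B}$) if $\mathcal{C}$ contains every rule of $\mathcal{B}$. Derivability $\vdash_{\mathcal{B}}$ of atomic sequents is the least relation such that: (Axiom/Weakening) if an atomic axiom with conclusion $\Gamma_{\mathsf{At}}\Rightarrow\Delta_{\mathsf{At}}$ is in $\mathcal{B}$, then $\vdash_{\mathcal{B}}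 \Theta_{\mathsf{At}},\Gamma_{\mathsf{At}}\Rightarrow\Delta_{\mathsf{At}},\Sigma_{\mathsf{At}}$ for all sets of atoms $\Theta_{\mathsf{At}},\Sigma_{\mathsf{At}}$; (Mix) if a rule with premises $\Gamma^i_{\mathsf{At}}\Rightarrow\Delta^i_{\mathsf{At}}$ ($1\le i\le n$) and conclusion $\Gamma_{\mathsf{At}}\Rightarrow\Delta_{\mathsf{At}}$ is in $\mathcal{B}$ and $\vdash_{\mathcal{B}} \Theta^i_{\mathsf{At}},\Gamma^i_{\mathsf{At}}\Rightarrow\Delta^i_{\mathsf{At}},\Sigma^i_{\mathsf{At}}$ for each $i$, then $\vdash_{\mathcal{B}} \Theta^1_{\mathsf{At}},\dots,\Theta^n_{\mathsf{At}},\Gamma_{\mathsf{At}}\Rightarrow\Delta_{\mathsf{At}},\Sigma^1_{\mathsf{At}},\dots,\Sigma^n_{\mathsf{At}}$. Support $\Vdash_{\mathcal{B}}$: (At) $\Vdash_{\mathcal{B}}\Gamma_{\mathsf{At}}$ iff $\vdash_{\mathcal{B}}\ \Rightarrow\Gamma_{\mathsf{At}}$; ($\land$) $\Vdash_{\mathcal{B}} A\land B,\Gamma$ iff $\Vdash_{\mathcal{B}}A,\Gamma$ and $\Vdash_{\mathcal{B}}B,\Gamma$; ($\lor$) $\Vdash_{\mathcal{B}}A\lor B,\Gamma$ iff $\Vdash_{\mathcal{B}}A,B,\Gamma$; ($\to$) $\Vdash_{\mathcal{B}}A\to B,\Gamma$ iff $A\Vdash_{\mathcal{B}}B,\Gamma$;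 ($\bot$) $\Vdash_{\mathcal{B}}\bot,\Gamma$ iff $\Vdash_{\mathcal{B}}\Gamma$; (Inf) for $n\ge1$, $\{A^1,\dots,A^n\}\Vdash_{\mathcal{B}}\Delta$ iff for every $\mathcal{C}\supseteq\mathcal{B}$ and all sets of atoms $\Theta^1_{\mathsf{At}},\dots,\Theta^n_{\mathsf{At}}$, if $\Vdash_{\mathcal{C}}\Theta^i_{\mathsf{At}},A^i$ for all $i$ then $\Vdash_{\mathcal{C}}\Theta^1_{\mathsf{At}},\dots,\Theta^n_{\mathsf{At}},\Delta$ (and $\varnothing\Vdash_{\mathcal{B}}\Delta$ means $\Vdash_{\mathcal{B}}\Delta$). The atomic identity rule $\mathsf{Ainit}$ is the atomic axiom $\Gamma_{\mathsf{At}},p\Rightarrow p,\Delta_{\mathsf{At}}$. $\mathcal{HS}$ is the base consisting of all instances of $\mathsf{Ainit}$. Atomic mapping: for a set of formulas $\Sigma_0$ with set of subformulas $S$, an atomic mapping is an injective function $\alpha:S\to\mathsf{At}$ with $\alpha(p)=p$ for every atom $p\in S$; write $p^A:=\alpha(A)$. The quasi-simulation base $\mathcal{Q}$ for $\Sigma_0$ and $\alpha$ consists exactly of $\mathcal{HS}$ together with the following atomic rules, for all formulas $A,B$ such that the displayed compound formula lies in $S$ (and for $p^\bot$ when $\bot\in S$), and all sets of atoms $\Gamma,\Delta,\Gamma',\Delta'$: $Q\land_1$: from $\Gamma\Rightarrow\Delta,p^{A\land B}$ infer $\Gamma\Rightarrow\Delta,p^A$; $Q\land_2$: from $\Gamma\Rightarrow\Delta,p^{A\land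 B}$ infer $\Gamma\Rightarrow\Delta,p^B$; $R\land$: from $\Gamma\Rightarrow\Delta,p^A$ and $\Gamma'\Rightarrow\Delta',p^B$ infer $\Gamma,\Gamma'\Rightarrow\Delta,\Delta',p^{A\land B}$; $Q\lor$: from $\Gamma\Rightarrow\Delta,p^{A\lor B}$ infer $\Gamma\Rightarrow\Delta,p^A,p^B$; $R\lor$: from $\Gamma\Rightarrow\Delta,p^A,p^B$ infer $\Gamma\Rightarrow\Delta,p^{A\lor B}$; $Q\to$: from $\Gamma\Rightarrow\Delta,p^{A\to B}$ and $\Gamma'\Rightarrow\Delta',p^A$ infer $\Gamma,\Gamma'\Rightarrow\Delta,\Delta',p^B$; $R\to$: from $p^A,\Gamma\Rightarrow\Delta,p^B$ infer $\Gamma\Rightarrow\Delta,p^{A\to B}$; $Q\bot$: from $\Gamma\Rightarrow\Delta,p^\bot$ infer $\Gamma\Rightarrow\Delta$. *)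

theory Defs
  imports Main
begin

datatype form = Atom nat | Bot | And form form | Or form form | Imp form form

type_synonym aseq = "nat set \<times> nat set"
type_synonym arule = "aseq list \<times> aseq"
type_synonym abase = "arule set"

definition finite_seq :: "aseq \<Rightarrow> bool" where
  "finite_seq s \<longleftrightarrow> finite (fst s) \<and> finite (snd s)"

definition is_base :: "abase \<Rightarrow> bool" where
  "is_base B \<longleftrightarrow> (\<forall>r\<in>B. finite_seq (snd r) \<and> (\<forall>s\<in>set (fst r). finite_seq s))"

inductive derives :: "abase \<Rightarrow> aseq \<Rightarrow> bool" for B :: abase where
  ax: "([], (G, D)) \<in> B \<Longrightarrow> finite T \<Longrightarrow> finite S \<Longrightarrow> derives B (T \<union> G, D \<union> S)"
| mix: "(ps, (G, D)) \<in> B \<Longrightarrow> length Ts = length ps \<Longrightarrow> length Ss = length ps \<Longrightarrow>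
        (\<forall>i<length ps. finite (Ts ! i) \<and> finite (Ss ! i) \<and>
            derives B ((Ts ! i) \<union> fst (ps ! i), snd (ps ! i) \<union> (Ss ! i))) \<Longrightarrow>
        derives B (\<Union>(set Ts) \<union> G, D \<union> \<Union>(set Ss))"

fun is_atom :: "form \<Rightarrow> bool" where
  "is_atom (Atom p) = True"
| "is_atom _ = False"

fun weight :: "form \<Rightarrow> nat" where
  "weight (Atom p) = 0"
| "weight Bot = 1"
| "weight (And a b) = weight a + weight b + 1"
| "weight (Or a b) = weight a + weight b + 1"
| "weight (Imp a b) = weight a + weight b + 1"

definition ctxw :: "form set \<Rightarrow> nat" where
  "ctxw G = sum weight G"

text \<open>If all its members are atoms,
  clause (At) applies; otherwise one compound formula is chosen and the corresponding
  clause is applied with the remaining context (the paper's clauses are independent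
  of the choice of compound formula).  The clause for implication uses the
  single-hypothesis instance of (Inf).\<close>

function supp :: "abase \<Rightarrow> form set \<Rightarrow> bool" where
  "supp B G =
    (if \<not> finite G then False
     else if (\<forall>F\<in>G. is_atom F) then derives B ({}, {p. Atom p \<in> G})
     else (let F = (SOME F. F \<in> G \<and> \<not> is_atom F); R = G - {F} in
       (case F of
          And X Y \<Rightarrow> supp B (insert X R) \<and> supp B (insert Y R)
        | Or X Y \<Rightarrow> supp B (insert X (insert Y R))
        | Imp X Y \<Rightarrow> (\<forall>C T. is_base C \<and> B \<subseteq> C \<and> finite T \<and> supp C (insert X (Atom ` T))
                          \<longrightarrow> supp C (insert Y R \<union> Atom ` T))
        | Bot \<Rightarrow> supp B R
        | Atom p \<Rightarrow> False)))"
  by pat_completeness auto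

lemma ctxw_atoms: "ctxw (Atom ` T) = 0"
proof (cases "finite T")
  case True thus ?thesis unfolding ctxw_def by (induct T rule: finite_induct) auto
next
  case False
  hence "infinite (Atom ` T)" by (meson finite_imageD inj_onI form.inject(1))
  thus ?thesis by (simp add: ctxw_def)
qed

lemma ctxw_insert_le: "finite R \<Longrightarrow> ctxw (insert X R) \<le> weight X + ctxw R"
  unfolding ctxw_def by (simp add: sum.insert_if)

lemma ctxw_un_le: "finite A \<Longrightarrow> finite B \<Longrightarrow> ctxw (A \<union> B) \<le> ctxw A + ctxw B"
  unfolding ctxw_def by (simp add: sum_Un_nat)

lemma ctxw_remove: "finite G \<Longrightarrow> F \<in> G \<Longrightarrow> ctxw G = weight F + ctxw (G - {F})"
  unfolding ctxw_def by (simp add: sum.remove)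

lemma some_in: "\<exists>x\<in>G. \<not> is_atom x \<Longrightarrow> (SOME F. F \<in> G \<and> \<not> is_atom F) \<in> G"
  by (rule someI2_ex) auto

termination
  apply (relation "measure (\<lambda>(B, G). ctxw G)")
        apply simp_all
  subgoal for G
    using ctxw_remove[of G Bot] some_in[of G] by auto
  subgoal premises p for G x xa X Y
  proof -
    have F: "(SOME F. F \<in> G \<and> \<not> is_atom F) = And X Y" using p(3) by simp
    have "And X Y \<in> G" using some_in[OF p(2)] F by simp
    hence "ctxw G = weight (And X Y) + ctxw (G - {And X Y})" using p(1) ctxw_remove by blast
    moreover have "ctxw (insert X (G - {And X Y})) \<le> weight X + ctxw (G - {And X Y})"
      using p(1) ctxw_insert_le by blast
    ultimately show ?thesis unfolding F by simp
  qed
  subgoal premises p for G x xa X Y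
  proof -
    have F: "(SOME F. F \<in> G \<and> \<not> is_atom F) = And X Y" using p(3) by simp
    have "And X Y \<in> G" using some_in[OF p(2)] F by simp
    hence "ctxw G = weight (And X Y) + ctxw (G - {And X Y})" using p(1) ctxw_remove by blast
    moreover have "ctxw (insert Y (G - {And X Y})) \<le> weight Y + ctxw (G - {And X Y})"
      using p(1) ctxw_insert_le by blast
    ultimately show ?thesis unfolding F by simp
  qed
  subgoal premises p for G x xa X Y
  proof -
    have F: "(SOME F. F \<in> G \<and> \<not> is_atom F) = Or X Y" using p(3) by simp
    have "Or X Y \<in> G" using some_in[OF p(2)] F by simp
    hence "ctxw G = weight (Or X Y) + ctxw (G - {Or X Y})" using p(1) ctxw_remove by blast
    moreover have "ctxw (insert X (insert Y (G - {Or X Y}))) \<le> weight X + (weight Y + ctxw (G - {Or X Y}))"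
      using p(1) ctxw_insert_le
      by (meson add_left_mono finite.insertI finite_Diff order_trans)
    ultimately show ?thesis unfolding F by simp
  qed
  subgoal premises p for G x xa X Y T
  proof -
    have F: "(SOME F. F \<in> G \<and> \<not> is_atom F) = Imp X Y" using p(3) by simp
    have "Imp X Y \<in> G" using some_in[OF p(2)] F by simp
    hence "ctxw G = weight (Imp X Y) + ctxw (G - {Imp X Y})" using p(1) ctxw_remove by blast
    moreover have "ctxw (insert X (Atom ` T)) \<le> weight X"
    proof (cases "finite T")
      case True thus ?thesis using ctxw_insert_le[of "Atom ` T" X] ctxw_atoms by auto
    next
      case False
      hence "infinite (insert X (Atom ` T))"
        by (meson finite_imageD finite_insert inj_onI form.inject(1))
      thus ?thesis by (simp add: ctxw_def)
    qed
    ultimately show ?thesis by simp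
  qed
  subgoal premises p for B G x xa X Y C T
  proof -
    have F: "(SOME F. F \<in> G \<and> \<not> is_atom F) = Imp X Y" using p(3) by simp
    have "Imp X Y \<in> G" using some_in[OF p(2)] F by simp
    hence "ctxw G = weight (Imp X Y) + ctxw (G - {Imp X Y})" using p(1) ctxw_remove by blast
    moreover have "ctxw (insert Y (G - {Imp X Y} \<union> Atom ` T)) \<le> weight Y + ctxw (G - {Imp X Y})"
    proof -
      have ft: "finite T" using p(6) by simp
      have "ctxw (insert Y (G - {Imp X Y} \<union> Atom ` T)) \<le> weight Y + ctxw (G - {Imp X Y} \<union> Atom ` T)"
        using p(1) ft ctxw_insert_le by blast
      moreover have "ctxw (G - {Imp X Y} \<union> Atom ` T) \<le> ctxw (G - {Imp X Y}) + ctxw (Atom ` T)"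
        using p(1) ft ctxw_un_le by blast
      ultimately show ?thesis using ctxw_atoms by simp
    qed
    ultimately show ?thesis unfolding F by simp
  qed
  done

fun subf :: "form \<Rightarrow> form set" where
  "subf (Atom p) = {Atom p}"
| "subf Bot = {Bot}"
| "subf (And a b) = insert (And a b) (subf a \<union> subf b)"
| "subf (Or a b) = insert (Or a b) (subf a \<union> subf b)"
| "subf (Imp a b) = insert (Imp a b) (subf a \<union> subf b)"

definition subformulas :: "form set \<Rightarrow> form set" where
  "subformulas S0 = \<Union>(subf ` S0)"

definition atomic_mapping :: "form set \<Rightarrow> (form \<Rightarrow> nat) \<Rightarrow> bool" where
  "atomic_mapping S0 \<alpha> \<longleftrightarrow> inj_on \<alpha> (subformulas S0) \<and>
     (\<forall>p. Atom p \<in> subformulas S0 \<longrightarrow> \<alpha> (Atom p) = p)"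

definition HS :: abase where
  "HS = {([], (insert p G, insert p D)) | p G D. finite G \<and> finite D}"

definition Qbase :: "form set \<Rightarrow> (form \<Rightarrow> nat) \<Rightarrow> abase" where
  "Qbase S0 \<alpha> = HS
   \<union> {([(G, insert (\<alpha> (And A B)) D)], (G, insert (\<alpha> A) D)) | A B G D.
        And A B \<in> subformulas S0 \<and> finite G \<and> finite D}
   \<union> {([(G, insert (\<alpha> (And A B)) D)], (G, insert (\<alpha> B) D)) | A B G D.
        And A B \<in> subformulas S0 \<and> finite G \<and> finite D}
   \<union> {([(G, insert (\<alpha> A) D), (G', insert (\<alpha> B) D')], (G \<union> G', insert (\<alpha> (And A B)) (D \<union> D')))
        | A B G D G' D'.
        And A B \<in> subformulas S0 \<and> finite G \<and> finite D \<and> finite G' \<and> finite D'}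
   \<union> {([(G, insert (\<alpha> (Or A B)) D)], (G, insert (\<alpha> A) (insert (\<alpha> B) D))) | A B G D.
        Or A B \<in> subformulas S0 \<and> finite G \<and> finite D}
   \<union> {([(G, insert (\<alpha> A) (insert (\<alpha> B) D))], (G, insert (\<alpha> (Or A B)) D)) | A B G D.
        Or A B \<in> subformulas S0 \<and> finite G \<and> finite D}
   \<union> {([(G, insert (\<alpha> (Imp A B)) D), (G', insert (\<alpha> A) D')], (G \<union> G', insert (\<alpha> B) (D \<union> D')))
        | A B G D G' D'.
        Imp A B \<in> subformulas S0 \<and> finite G \<and> finite D \<and> finite G' \<and> finite D'}
   \<union> {([(insert (\<alpha> A) G, insert (\<alpha> B) D)], (G, insert (\<alpha> (Imp A B)) D)) | A B G D.
        Imp A B \<in> subformulas S0 \<and> finite G \<and> finite D}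
   \<union> {([(G, insert (\<alpha> Bot) D)], (G, D)) | G D.
        Bot \<in> subformulas S0 \<and> finite G \<and> finite D}"

end

theory Submission
  imports Defs
begin

(* Induction on the weight of the context. The support clause for the main connective of a
   compound formula is matched, on its atom, by the corresponding pair of Q-rules:
   Q-and/R-and make  => p^(A and B), D  derivable iff  => p^A, D  and  => p^B, D  are, and
   likewise for disjunction and (with weakening) for falsum. For an implication A -> B the
   support clause quantifies over all extensions C of the base. One direction is modus
   ponens Q-> inside C. For the other, take C to be the base extended by the atomic axiom
   => p^A: a derivation in C becomes one in the base with p^A added to the antecedent, since
   Ainit replaces each use of the new axiom, and R-> then yields  => p^(A -> B), D. *)

declare supp.simps [simp del]

lemma HS_subset_Qbase: "HS \<subseteq> Qbase S0 \<alpha>"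
  unfolding Qbase_def by blast

lemma Qbase_conj_elim1:
  "And A B \<in> subformulas S0 \<Longrightarrow> finite G \<Longrightarrow> finite D \<Longrightarrow>
   ([(G, insert (\<alpha> (And A B)) D)], (G, insert (\<alpha> A) D)) \<in> Qbase S0 \<alpha>"
  unfolding Qbase_def
  by (rule UnI1, rule UnI1, rule UnI1, rule UnI1, rule UnI1, rule UnI1, rule UnI1, rule UnI2) blast

lemma Qbase_conj_elim2:
  "And A B \<in> subformulas S0 \<Longrightarrow> finite G \<Longrightarrow> finite D \<Longrightarrow>
   ([(G, insert (\<alpha> (And A B)) D)], (G, insert (\<alpha> B) D)) \<in> Qbase S0 \<alpha>"
  unfolding Qbase_def
  by (rule UnI1, rule UnI1, rule UnI1, rule UnI1, rule UnI1, rule UnI1, rule UnI2) blast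

lemma Qbase_conj_intro:
  "And A B \<in> subformulas S0 \<Longrightarrow> finite G \<Longrightarrow> finite D \<Longrightarrow> finite G' \<Longrightarrow> finite D' \<Longrightarrow>
   ([(G, insert (\<alpha> A) D), (G', insert (\<alpha> B) D')], (G \<union> G', insert (\<alpha> (And A B)) (D \<union> D')))
     \<in> Qbase S0 \<alpha>"
  unfolding Qbase_def
  by (rule UnI1, rule UnI1, rule UnI1, rule UnI1, rule UnI1, rule UnI2) blast

lemma Qbase_disj_elim:
  "Or A B \<in> subformulas S0 \<Longrightarrow> finite G \<Longrightarrow> finite D \<Longrightarrow>
   ([(G, insert (\<alpha> (Or A B)) D)], (G, insert (\<alpha> A) (insert (\<alpha> B) D))) \<in> Qbase S0 \<alpha>"
  unfolding Qbase_def
  by (rule UnI1, rule UnI1, rule UnI1, rule UnI1, rule UnI2) blast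

lemma Qbase_disj_intro:
  "Or A B \<in> subformulas S0 \<Longrightarrow> finite G \<Longrightarrow> finite D \<Longrightarrow>
   ([(G, insert (\<alpha> A) (insert (\<alpha> B) D))], (G, insert (\<alpha> (Or A B)) D)) \<in> Qbase S0 \<alpha>"
  unfolding Qbase_def
  by (rule UnI1, rule UnI1, rule UnI1, rule UnI2) blast

lemma Qbase_imp_elim:
  "Imp A B \<in> subformulas S0 \<Longrightarrow> finite G \<Longrightarrow> finite D \<Longrightarrow> finite G' \<Longrightarrow> finite D' \<Longrightarrow>
   ([(G, insert (\<alpha> (Imp A B)) D), (G', insert (\<alpha> A) D')], (G \<union> G', insert (\<alpha> B) (D \<union> D')))
     \<in> Qbase S0 \<alpha>"
  unfolding Qbase_def
  by (rule UnI1, rule UnI1, rule UnI2) blast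

lemma Qbase_imp_intro:
  "Imp A B \<in> subformulas S0 \<Longrightarrow> finite G \<Longrightarrow> finite D \<Longrightarrow>
   ([(insert (\<alpha> A) G, insert (\<alpha> B) D)], (G, insert (\<alpha> (Imp A B)) D)) \<in> Qbase S0 \<alpha>"
  unfolding Qbase_def
  by (rule UnI1, rule UnI2) blast

lemma Qbase_bot_elim:
  "Bot \<in> subformulas S0 \<Longrightarrow> finite G \<Longrightarrow> finite D \<Longrightarrow>
   ([(G, insert (\<alpha> Bot) D)], (G, D)) \<in> Qbase S0 \<alpha>"
  unfolding Qbase_def by (rule UnI2) blast

lemma derives_mono: "derives B s \<Longrightarrow> B \<subseteq> C \<Longrightarrow> derives C s"
proof (induction rule: derives.induct)
  case (ax G D T S) then show ?case by (auto intro: derives.ax)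
next
  case (mix ps G D Ts Ss) then show ?case by (auto intro!: derives.mix)
qed

lemma derives_mix1:
  "([(G0, D0)], (G, D)) \<in> B \<Longrightarrow> finite T \<Longrightarrow> finite S \<Longrightarrow>
   derives B (T \<union> G0, D0 \<union> S) \<Longrightarrow> derives B (T \<union> G, D \<union> S)"
  using derives.mix[of "[(G0, D0)]" G D B "[T]" "[S]"] by simp

lemma derives_mix2:
  "([(G1, D1), (G2, D2)], (G, D)) \<in> B \<Longrightarrow> finite T1 \<Longrightarrow> finite S1 \<Longrightarrow> finite T2 \<Longrightarrow> finite S2 \<Longrightarrow>
   derives B (T1 \<union> G1, D1 \<union> S1) \<Longrightarrow> derives B (T2 \<union> G2, D2 \<union> S2) \<Longrightarrow>
   derives B (T1 \<union> T2 \<union> G, D \<union> (S1 \<union> S2))"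
  using derives.mix[of "[(G1, D1), (G2, D2)]" G D B "[T1, T2]" "[S1, S2]"]
  by (auto simp: less_Suc_eq nth_Cons' Un_assoc)

lemma derives_weaken:
  assumes "derives B (G, D)" and "finite T" and "finite S"
  shows "derives B (T \<union> G, D \<union> S)"
  using assms
proof (induction "(G, D)" arbitrary: G D T S)
  case (ax G0 D0 T0 S0)
  then show ?case using derives.ax[of G0 D0 B "T \<union> T0" "S0 \<union> S"] by (auto simp: Un_assoc)
next
  case (mix ps G0 D0 Ts Ss)
  show ?case
  proof (cases "ps = []")
    case True
    then show ?thesis using mix derives.ax[of G0 D0 B T S] by simp
  next
    case False
    let ?Ts = "map (\<lambda>T'. T \<union> T') Ts" and ?Ss = "map (\<lambda>S'. S' \<union> S) Ss"
    have "derives B (\<Union>(set ?Ts) \<union> G0, D0 \<union> \<Union>(set ?Ss))"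
      by (rule derives.mix[OF mix(1)]) (use mix in \<open>auto simp: Un_assoc\<close>)
    moreover have "\<Union>(set ?Ts) = T \<union> \<Union>(set Ts)" "\<Union>(set ?Ss) = \<Union>(set Ss) \<union> S"
      using False mix(2,3) by (cases Ts; cases Ss; auto)+
    ultimately show ?thesis using mix(5) by (simp add: Un_assoc)
  qed
qed

lemma derives_discharge_axiom:
  assumes "derives (insert ([], ({}, {p})) B) (G, D)" and "HS \<subseteq> B"
  shows "derives B (insert p G, D)"
proof -
  have "([], ({p}, {p})) \<in> B"
    using assms(2) unfolding HS_def by blast
  from derives.ax[OF this, of "{}" "{}"] have init: "derives B ({p}, {p})" by simp
  from assms(1) show ?thesis
  proof (induction "(G, D)" arbitrary: G D)
    case (ax G0 D0 T S)
    show ?case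
    proof (cases "([], (G0, D0)) \<in> B")
      case True
      from derives.ax[OF this, of "insert p T" S] ax(2,3) show ?thesis by simp
    next
      case False
      with ax(1) have "G0 = {}" "D0 = {p}" by auto
      with derives_weaken[OF init ax(2,3)] show ?thesis by (simp add: insert_absorb)
    qed
  next
    case (mix ps G0 D0 Ts Ss)
    show ?case
    proof (cases "(ps, (G0, D0)) \<in> B")
      case True
      let ?Ts = "map (insert p) Ts"
      have "derives B (\<Union>(set ?Ts) \<union> G0, D0 \<union> \<Union>(set Ss))"
        by (rule derives.mix[OF True]) (use mix(2-4) in simp_all)
      from derives_weaken[OF this, of "{p}" "{}"]
      have "derives B (insert p (\<Union>(set ?Ts) \<union> G0), D0 \<union> \<Union>(set Ss))" by simp
      moreover have "insert p (\<Union>(set ?Ts) \<union> G0) = insert p (\<Union>(set Ts) \<union> G0)" by auto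
      ultimately show ?thesis by simp
    next
      case False
      with mix(1-3) have "G0 = {}" "D0 = {p}" "Ts = []" "Ss = []" by auto
      with init show ?thesis by simp
    qed
  qed
qed

context
  fixes S0 :: "form set" and \<alpha> :: "form \<Rightarrow> nat" and B :: abase
  assumes Q: "Qbase S0 \<alpha> \<subseteq> B"
begin

lemma derives_Qbase_conj_iff:
  assumes "And X Y \<in> subformulas S0" and "finite T" and "finite D"
  shows "derives B (T, insert (\<alpha> (And X Y)) D)
     \<longleftrightarrow> derives B (T, insert (\<alpha> X) D) \<and> derives B (T, insert (\<alpha> Y) D)"
proof -
  have elim1: "([({}, {\<alpha> (And X Y)})], ({}, {\<alpha> X})) \<in> B"
    and elim2: "([({}, {\<alpha> (And X Y)})], ({}, {\<alpha> Y})) \<in> B"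
    and intro: "([({}, {\<alpha> X}), ({}, {\<alpha> Y})], ({}, {\<alpha> (And X Y)})) \<in> B"
    using Q Qbase_conj_elim1[OF assms(1)] Qbase_conj_elim2[OF assms(1)]
      Qbase_conj_intro[OF assms(1), of "{}" "{}" "{}" "{}" \<alpha>] by auto
  show ?thesis
    using derives_mix1[OF elim1 assms(2,3)] derives_mix1[OF elim2 assms(2,3)]
      derives_mix2[OF intro assms(2,3) assms(2,3)] by auto
qed

lemma derives_Qbase_disj_iff:
  assumes "Or X Y \<in> subformulas S0" and "finite T" and "finite D"
  shows "derives B (T, insert (\<alpha> (Or X Y)) D) \<longleftrightarrow> derives B (T, insert (\<alpha> X) (insert (\<alpha> Y) D))"
proof -
  have elim: "([({}, {\<alpha> (Or X Y)})], ({}, {\<alpha> X, \<alpha> Y})) \<in> B"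
    and intro: "([({}, {\<alpha> X, \<alpha> Y})], ({}, {\<alpha> (Or X Y)})) \<in> B"
    using Q Qbase_disj_elim[OF assms(1)] Qbase_disj_intro[OF assms(1)] by auto
  show ?thesis
    using derives_mix1[OF elim assms(2,3)] derives_mix1[OF intro assms(2,3)] by auto
qed

lemma derives_Qbase_bot_iff:
  assumes "Bot \<in> subformulas S0" and "finite T" and "finite D"
  shows "derives B (T, insert (\<alpha> Bot) D) \<longleftrightarrow> derives B (T, D)"
proof -
  have "([({}, {\<alpha> Bot})], ({}, {})) \<in> B"
    using Q Qbase_bot_elim[OF assms(1)] by auto
  from derives_mix1[OF this assms(2,3)] derives_weaken[of B T D "{}" "{\<alpha> Bot}"] assms(2,3)
  show ?thesis by auto
qed

lemma derives_Qbase_impI: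
  assumes "Imp X Y \<in> subformulas S0" and "finite T" and "finite D"
    and "derives B (insert (\<alpha> X) T, insert (\<alpha> Y) D)"
  shows "derives B (T, insert (\<alpha> (Imp X Y)) D)"
proof -
  have "([({\<alpha> X}, {\<alpha> Y})], ({}, {\<alpha> (Imp X Y)})) \<in> B"
    using Q Qbase_imp_intro[OF assms(1)] by auto
  from derives_mix1[OF this assms(2,3)] assms(4) show ?thesis by auto
qed

lemma derives_Qbase_mp:
  assumes "Imp X Y \<in> subformulas S0" and "finite T1" and "finite D1" and "finite T2" and "finite D2"
    and "derives B (T1, insert (\<alpha> (Imp X Y)) D1)" and "derives B (T2, insert (\<alpha> X) D2)"
  shows "derives B (T1 \<union> T2, insert (\<alpha> Y) (D1 \<union> D2))"
proof -
  have "([({}, {\<alpha> (Imp X Y)}), ({}, {\<alpha> X})], ({}, {\<alpha> Y})) \<in> B"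
    using Q Qbase_imp_elim[OF assms(1), of "{}" "{}" "{}" "{}" \<alpha>] by auto
  from derives_mix2[OF this assms(2-5)] assms(6,7) show ?thesis by auto
qed

end

lemma derives_Qbase_imp_iff_extensions:
  assumes Q: "Qbase S0 \<alpha> \<subseteq> B" and "is_base B" and "Imp X Y \<in> subformulas S0" and "finite D"
  shows "(\<forall>C T. is_base C \<and> B \<subseteq> C \<and> finite T \<and> derives C ({}, insert (\<alpha> X) T)
              \<longrightarrow> derives C ({}, insert (\<alpha> Y) (D \<union> T)))
    \<longleftrightarrow> derives B ({}, insert (\<alpha> (Imp X Y)) D)" (is "?ext \<longleftrightarrow> _")
proof
  assume ?ext
  \<comment> \<open>The least extension of \<open>B\<close> deriving \<open>\<Rightarrow> \<alpha> X\<close>; Ainit discharges its new axiom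
    into the antecedent.\<close>
  define C where "C = insert ([], ({}, {\<alpha> X})) B"
  have "is_base C" "B \<subseteq> C"
    using \<open>is_base B\<close> unfolding C_def is_base_def finite_seq_def by auto
  moreover have "derives C ({}, {\<alpha> X})"
    using derives.ax[of "{}" "{\<alpha> X}" C "{}" "{}"] unfolding C_def by simp
  ultimately have "derives C ({}, insert (\<alpha> Y) D)"
    using \<open>?ext\<close> by (metis Un_empty_right finite.emptyI)
  then have "derives B ({\<alpha> X}, insert (\<alpha> Y) D)"
    using derives_discharge_axiom[of "\<alpha> X" B] Q HS_subset_Qbase unfolding C_def by blast
  then show "derives B ({}, insert (\<alpha> (Imp X Y)) D)"
    using derives_Qbase_impI[OF Q assms(3)] assms(4) by simp
next
  assume imp: "derives B ({}, insert (\<alpha> (Imp X Y)) D)"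
  show ?ext
  proof (intro allI impI)
    fix C T
    assume C: "is_base C \<and> B \<subseteq> C \<and> finite T \<and> derives C ({}, insert (\<alpha> X) T)"
    then have "Qbase S0 \<alpha> \<subseteq> C" using Q by blast
    from derives_Qbase_mp[OF this assms(3) _ assms(4) _ _ derives_mono[OF imp]] C
    show "derives C ({}, insert (\<alpha> Y) (D \<union> T))" by auto
  qed
qed

lemma supp_atoms:
  assumes "finite G" and "\<forall>F\<in>G. is_atom F"
  shows "supp B G \<longleftrightarrow> derives B ({}, {p. Atom p \<in> G})"
  using assms by (subst supp.simps) simp

lemma supp_compound:
  assumes "finite G" and "\<not> (\<forall>F\<in>G. is_atom F)" and "F = (SOME F. F \<in> G \<and> \<not> is_atom F)"
  shows "supp B G = (case F of
          And X Y \<Rightarrow> supp B (insert X (G - {F})) \<and> supp B (insert Y (G - {F}))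
        | Or X Y \<Rightarrow> supp B (insert X (insert Y (G - {F})))
        | Imp X Y \<Rightarrow> (\<forall>C T. is_base C \<and> B \<subseteq> C \<and> finite T \<and> supp C (insert X (Atom ` T))
                          \<longrightarrow> supp C (insert Y (G - {F}) \<union> Atom ` T))
        | Bot \<Rightarrow> supp B (G - {F})
        | Atom p \<Rightarrow> False)"
  by (subst supp.simps) (simp only: assms(1,2) assms(3)[symmetric] if_False Let_def simp_thms)

lemma subf_self: "A \<in> subf A"
  by (cases A) auto

lemma subf_trans: "A \<in> subf F \<Longrightarrow> subf A \<subseteq> subf F"
  by (induction F) auto

lemma subformulas_children:
  assumes "F \<in> subformulas S" and "F \<in> {And X Y, Or X Y, Imp X Y}"
  shows "X \<in> subformulas S" and "Y \<in> subformulas S"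
proof -
  have "X \<in> subf F" "Y \<in> subf F"
    using assms(2) subf_self[of X] subf_self[of Y] by auto
  then show "X \<in> subformulas S" "Y \<in> subformulas S"
    using assms(1) subf_trans unfolding subformulas_def by blast+
qed

lemma atomic_mapping_image_atoms:
  assumes "atomic_mapping S \<alpha>" and "\<Sigma> \<subseteq> subformulas S" and "\<forall>F\<in>\<Sigma>. is_atom F"
  shows "\<alpha> ` \<Sigma> = {p. Atom p \<in> \<Sigma>}"
proof -
  have atom: "F = Atom (\<alpha> F)" if F: "F \<in> \<Sigma>" for F
  proof -
    obtain q where "F = Atom q"
      using assms(3) F by (cases F) auto
    with assms(1,2) F show ?thesis unfolding atomic_mapping_def by auto
  qed
  show ?thesis
    by (auto simp: image_iff) (metis atom, metis atom form.inject(1))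
qed

lemma ctxw_replace_less:
  assumes "finite \<Sigma>" and "F \<in> \<Sigma>" and "finite A" and "ctxw A < weight F"
  shows "ctxw (A \<union> (\<Sigma> - {F})) < ctxw \<Sigma>"
  using ctxw_un_le[OF assms(3), of "\<Sigma> - {F}"] ctxw_remove[OF assms(1,2)] assms by simp

lemma supp_compound_context:
  assumes "finite \<Sigma>" and "finite \<Theta>" and "\<exists>F\<in>\<Sigma>. \<not> is_atom F"
    and F_def: "F = (SOME F. F \<in> \<Sigma> \<and> \<not> is_atom F)"
  shows "supp B (\<Sigma> \<union> Atom ` \<Theta>) = (case F of
          And X Y \<Rightarrow> supp B (insert X (\<Sigma> - {F}) \<union> Atom ` \<Theta>) \<and> supp B (insert Y (\<Sigma> - {F}) \<union> Atom ` \<Theta>)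
        | Or X Y \<Rightarrow> supp B (insert X (insert Y (\<Sigma> - {F})) \<union> Atom ` \<Theta>)
        | Imp X Y \<Rightarrow> (\<forall>C T. is_base C \<and> B \<subseteq> C \<and> finite T \<and> supp C (insert X (Atom ` T))
                          \<longrightarrow> supp C (insert Y (\<Sigma> - {F}) \<union> Atom ` (\<Theta> \<union> T)))
        | Bot \<Rightarrow> supp B ((\<Sigma> - {F}) \<union> Atom ` \<Theta>)
        | Atom p \<Rightarrow> False)"
proof -
  let ?G = "\<Sigma> \<union> Atom ` \<Theta>"
  have "(\<lambda>F. F \<in> ?G \<and> \<not> is_atom F) = (\<lambda>F. F \<in> \<Sigma> \<and> \<not> is_atom F)"
    by auto
  then have F_G: "F = (SOME F. F \<in> ?G \<and> \<not> is_atom F)"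
    unfolding F_def by simp
  have "F \<in> \<Sigma>" "\<not> is_atom F"
    unfolding F_def by (rule someI2_ex[OF assms(3)[unfolded Bex_def]]; simp)+
  then have G_F: "?G - {F} = (\<Sigma> - {F}) \<union> Atom ` \<Theta>"
    and "\<not> (\<forall>F\<in>?G. is_atom F)" "finite ?G"
    using assms(1,2) by auto
  from supp_compound[OF this(3,2) F_G, of B]
  show ?thesis
    unfolding G_F Un_insert_left[symmetric] Un_assoc image_Un[symmetric] .
qed

definition Qbase_simulates :: "form set \<Rightarrow> (form \<Rightarrow> nat) \<Rightarrow> form set \<Rightarrow> bool" where
  "Qbase_simulates S0 \<alpha> \<Sigma> \<longleftrightarrow> (\<forall>B \<Theta>. is_base B \<longrightarrow> Qbase S0 \<alpha> \<subseteq> B \<longrightarrow> finite \<Theta> \<longrightarrow>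
     (supp B (\<Sigma> \<union> Atom ` \<Theta>) \<longleftrightarrow> derives B ({}, \<alpha> ` \<Sigma> \<union> \<Theta>)))"

lemma Qbase_simulatesD:
  "Qbase_simulates S0 \<alpha> \<Sigma> \<Longrightarrow> is_base B \<Longrightarrow> Qbase S0 \<alpha> \<subseteq> B \<Longrightarrow> finite \<Theta> \<Longrightarrow>
   supp B (\<Sigma> \<union> Atom ` \<Theta>) \<longleftrightarrow> derives B ({}, \<alpha> ` \<Sigma> \<union> \<Theta>)"
  unfolding Qbase_simulates_def by blast

lemma Qbase_simulates_atoms:
  assumes "atomic_mapping S0 \<alpha>" and "finite \<Sigma>" and "\<Sigma> \<subseteq> subformulas S0" and "\<forall>F\<in>\<Sigma>. is_atom F"
  shows "Qbase_simulates S0 \<alpha> \<Sigma>"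
  unfolding Qbase_simulates_def
proof (intro allI impI)
  fix B :: abase and \<Theta> :: "nat set"
  assume "finite \<Theta>"
  then have "supp B (\<Sigma> \<union> Atom ` \<Theta>) \<longleftrightarrow> derives B ({}, {p. Atom p \<in> \<Sigma> \<union> Atom ` \<Theta>})"
    using assms(2,4) by (intro supp_atoms) auto
  moreover have "{p. Atom p \<in> \<Sigma> \<union> Atom ` \<Theta>} = \<alpha> ` \<Sigma> \<union> \<Theta>"
    using atomic_mapping_image_atoms[OF assms(1,3,4)] by auto
  ultimately show "supp B (\<Sigma> \<union> Atom ` \<Theta>) \<longleftrightarrow> derives B ({}, \<alpha> ` \<Sigma> \<union> \<Theta>)"
    by simp
qed

lemma Qbase_simulates_imp_clause:
  assumes sim_X: "Qbase_simulates S0 \<alpha> {X}" and sim_Y: "Qbase_simulates S0 \<alpha> (insert Y R)"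
    and "Imp X Y \<in> subformulas S0" and "finite R" and "finite \<Theta>"
    and "is_base B" and Q: "Qbase S0 \<alpha> \<subseteq> B"
  shows "(\<forall>C T. is_base C \<and> B \<subseteq> C \<and> finite T \<and> supp C (insert X (Atom ` T))
            \<longrightarrow> supp C (insert Y R \<union> Atom ` (\<Theta> \<union> T)))
    \<longleftrightarrow> derives B ({}, insert (\<alpha> (Imp X Y)) (\<alpha> ` R \<union> \<Theta>))"
proof -
  have "Qbase S0 \<alpha> \<subseteq> C" if "B \<subseteq> C" for C
    using Q that by blast
  then have "(\<forall>C T. is_base C \<and> B \<subseteq> C \<and> finite T \<and> supp C (insert X (Atom ` T))
            \<longrightarrow> supp C (insert Y R \<union> Atom ` (\<Theta> \<union> T)))
    \<longleftrightarrow> (\<forall>C T. is_base C \<and> B \<subseteq> C \<and> finite T \<and> derives C ({}, insert (\<alpha> X) T)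
            \<longrightarrow> derives C ({}, insert (\<alpha> Y) ((\<alpha> ` R \<union> \<Theta>) \<union> T)))"
    using Qbase_simulatesD[OF sim_X] Qbase_simulatesD[OF sim_Y] \<open>finite \<Theta>\<close>
    by (auto simp: Un_assoc)
  also have "\<dots> \<longleftrightarrow> derives B ({}, insert (\<alpha> (Imp X Y)) (\<alpha> ` R \<union> \<Theta>))"
    using assms(3-7) by (intro derives_Qbase_imp_iff_extensions) auto
  finally show ?thesis .
qed

lemma Qbase_simulates_compound:
  assumes "finite \<Sigma>" and "\<Sigma> \<subseteq> subformulas S0" and "\<exists>F\<in>\<Sigma>. \<not> is_atom F"
    and IH: "\<And>\<Sigma>'. finite \<Sigma>' \<Longrightarrow> \<Sigma>' \<subseteq> subformulas S0 \<Longrightarrow> ctxw \<Sigma>' < ctxw \<Sigma> \<Longrightarrow> Qbase_simulates S0 \<alpha> \<Sigma>'"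
  shows "Qbase_simulates S0 \<alpha> \<Sigma>"
  unfolding Qbase_simulates_def
proof (intro allI impI)
  fix B :: abase and \<Theta> :: "nat set"
  assume B: "is_base B" "Qbase S0 \<alpha> \<subseteq> B" and "finite \<Theta>"
  define F where "F = (SOME F. F \<in> \<Sigma> \<and> \<not> is_atom F)"
  have F: "F \<in> \<Sigma>" "\<not> is_atom F"
    unfolding F_def by (rule someI2_ex[OF assms(3)[unfolded Bex_def]]; simp)+
  note supp_\<Sigma> = supp_compound_context[OF assms(1) \<open>finite \<Theta>\<close> assms(3) F_def, of B]
  define R where "R = \<Sigma> - {F}"
  define D where "D = \<alpha> ` R \<union> \<Theta>"
  have "finite R" "finite D"
    using assms(1) \<open>finite \<Theta>\<close> unfolding R_def D_def by simp_all
  have "F \<in> subformulas S0"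
    using F(1) assms(2) by blast
  have smaller: "Qbase_simulates S0 \<alpha> (A \<union> R)"
    if "finite A" "A \<subseteq> subformulas S0" "ctxw A < weight F" for A
    using that assms(1,2) ctxw_replace_less[OF assms(1) F(1) that(1,3)]
    unfolding R_def by (intro IH) auto
  have sim: "supp B (A \<union> R \<union> Atom ` \<Theta>) \<longleftrightarrow> derives B ({}, \<alpha> ` A \<union> D)"
    if "finite A" "A \<subseteq> subformulas S0" "ctxw A < weight F" for A
    using Qbase_simulatesD[OF smaller[OF that] B \<open>finite \<Theta>\<close>]
    unfolding D_def by (simp add: image_Un Un_assoc)
  have "\<alpha> ` \<Sigma> \<union> \<Theta> = insert (\<alpha> F) D"
    using F(1) unfolding D_def R_def by auto
  moreover have "supp B (\<Sigma> \<union> Atom ` \<Theta>) \<longleftrightarrow> derives B ({}, insert (\<alpha> F) D)"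
  proof (cases F)
    case (Atom p)
    with F(2) show ?thesis by simp
  next
    case Bot
    with supp_\<Sigma> sim[of "{}"] derives_Qbase_bot_iff[OF B(2) _ _ \<open>finite D\<close>] \<open>F \<in> subformulas S0\<close>
    show ?thesis unfolding R_def by (simp add: ctxw_def)
  next
    case (And X Y)
    with supp_\<Sigma> sim[of "{X}"] sim[of "{Y}"] derives_Qbase_conj_iff[OF B(2) _ _ \<open>finite D\<close>]
      subformulas_children[OF \<open>F \<in> subformulas S0\<close>, of X Y] \<open>F \<in> subformulas S0\<close>
    show ?thesis unfolding R_def by (simp add: ctxw_def)
  next
    case (Or X Y)
    then have "ctxw {X, Y} < weight F"
      using ctxw_insert_le[of "{Y}" X] by (simp add: ctxw_def)
    with Or supp_\<Sigma> sim[of "{X, Y}"] derives_Qbase_disj_iff[OF B(2) _ _ \<open>finite D\<close>]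
      subformulas_children[OF \<open>F \<in> subformulas S0\<close>, of X Y] \<open>F \<in> subformulas S0\<close>
    show ?thesis unfolding R_def by simp
  next
    case (Imp X Y)
    have XY: "X \<in> subformulas S0" "Y \<in> subformulas S0"
      using subformulas_children[OF \<open>F \<in> subformulas S0\<close>] Imp by auto
    have "ctxw {X} < ctxw \<Sigma>"
      using ctxw_remove[OF assms(1) F(1)] Imp by (simp add: ctxw_def)
    with XY(1) have "Qbase_simulates S0 \<alpha> {X}"
      by (intro IH) auto
    moreover have "Qbase_simulates S0 \<alpha> (insert Y R)"
      using smaller[of "{Y}"] XY Imp by (simp add: ctxw_def)
    ultimately show ?thesis
      using supp_\<Sigma> Imp Qbase_simulates_imp_clause[OF _ _ _ \<open>finite R\<close> \<open>finite \<Theta>\<close> B] \<open>F \<in> subformulas S0\<close>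
      unfolding R_def D_def by simp
  qed
  ultimately show "supp B (\<Sigma> \<union> Atom ` \<Theta>) \<longleftrightarrow> derives B ({}, \<alpha> ` \<Sigma> \<union> \<Theta>)"
    by simp
qed

lemma Qbase_simulates_subformulas:
  assumes "atomic_mapping S0 \<alpha>" and "finite \<Sigma>" and "\<Sigma> \<subseteq> subformulas S0"
  shows "Qbase_simulates S0 \<alpha> \<Sigma>"
  using assms(2,3)
proof (induction "ctxw \<Sigma>" arbitrary: \<Sigma> rule: less_induct)
  case less
  show ?case
  proof (cases "\<forall>F\<in>\<Sigma>. is_atom F")
    case True
    with assms(1) less.prems show ?thesis by (rule Qbase_simulates_atoms)
  next
    case False
    then have "\<exists>F\<in>\<Sigma>. \<not> is_atom F" by blast
    with less.prems show ?thesis by (rule Qbase_simulates_compound) (use less.hyps in blast)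
  qed
qed

theorem lemma6:
  fixes \<Gamma> \<Delta> \<Sigma> :: "form set" and \<alpha> :: "form \<Rightarrow> nat" and \<Theta> :: "nat set" and \<B> :: abase
  assumes "finite \<Gamma>" and "finite \<Delta>"
    and "atomic_mapping (\<Gamma> \<union> \<Delta>) \<alpha>"
    and "finite \<Theta>"
    and "finite \<Sigma>" and "\<Sigma> \<noteq> {}" and "\<Sigma> \<subseteq> subformulas (\<Gamma> \<union> \<Delta>)"
    and "is_base \<B>" and "Qbase (\<Gamma> \<union> \<Delta>) \<alpha> \<subseteq> \<B>"
  shows "supp \<B> (\<Sigma> \<union> Atom ` \<Theta>) \<longleftrightarrow> derives \<B> ({}, \<alpha> ` \<Sigma> \<union> \<Theta>)"
  using Qbase_simulates_subformulas[OF assms(3,5,7)] assms(8,9,4) by (rule Qbase_simulatesD)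

end
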